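(* Let $a,b\in\mathbb{R}$ and $W(x;a,b)=(1-x)^a(1+x)^b$. The function $W(x;a,b)$ has a quasi-rational antiderivative if and only if one of the following three mutually exclusive conditions holds: (A) either $a\in\mathbb{N}_0$ and $b\notin\mathbb{Z}_-$, or $b\in\mathbb{N}_0$ and $a\notin\mathbb{Z}_-$; (C) $a+b+1\in\mathbb{Z}_-$ and $a,b\notin\mathbb{Z}_-$; (H) $a+b+1\in\mathbb{Z}_-$ and $a,b\in\mathbb{Z}$ have opposite signs.
   Context: $\mathbb{Z}_-=\{-1,-2,-3,\ldots\}$. A function $\rho$ is quasi-rational if $\rho'/\rho$ is a rational function; a quasi-rational antiderivative of $W$ is a quasi-rational $\rho$ with $\rho'=W$. *)

theory Defs
  imports "HOL-Analysis.Analysis" "HOL-Computational_Algebra.Polynomial"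
begin

definition Zminus :: "real set" where
  "Zminus = {x. \<exists>n::nat. n \<ge> 1 \<and> x = - real n}"

definition W :: "real \<Rightarrow> real \<Rightarrow> real \<Rightarrow> real" where
  "W a b x = (1 - x) powr a * (1 + x) powr b"

text \<open>rho is quasi-rational on S with derivative d: rho has derivative d on S and
  rho'/rho equals a rational function p/q (q a nonzero real polynomial), written
  multiplied out as q * rho' = p * rho on S.\<close>
definition quasi_rational_on :: "real set \<Rightarrow> (real \<Rightarrow> real) \<Rightarrow> (real \<Rightarrow> real) \<Rightarrow> bool" where
  "quasi_rational_on S rho d \<longleftrightarrow>
     (\<forall>x\<in>S. (rho has_real_derivative d x) (at x)) \<and>
     (\<exists>p q :: real poly. q \<noteq> 0 \<and> (\<forall>x\<in>S. poly q x * d x = poly p x * rho x))"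

definition has_qr_antiderivative :: "real set \<Rightarrow> (real \<Rightarrow> real) \<Rightarrow> bool" where
  "has_qr_antiderivative S f \<longleftrightarrow> (\<exists>rho. quasi_rational_on S rho f)"

end

(*
  A quasi-rational antiderivative of W is rho = R W with R = q/p rational, and (R W)' = W says
  that R solves (1 - x^2) R' + (b (1 - x) - a (1 + x)) R = 1 - x^2.  Take p, q coprime.
  Near x = 1, if q(1) \<noteq> 0 then a is the order of vanishing of p at 1; so unless a \<in> \<nat>
  we get p(1) \<noteq> 0 = q(1), and symmetrically at -1 unless b \<in> \<nat>.  If both hold, p divides
  (1 - x^2) q p', hence p', so R is a polynomial vanishing at 1 and -1, and comparing leading
  coefficients gives a + b = -deg R \<le> -2.  If b = -l is a negative integer, then in t = 1 + x
  the function rho is 2^a t^b times a power series, so its derivative 2^a t^b (1 - t/2)^a has no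
  residue at t = 0: the binomial coefficient (a choose (l - 1)) vanishes, i.e. a \<in> {0, ..., l - 2}.
  Conversely, for a = n the antiderivative of (1 - x)^n (1 + x)^b is (1 + x)^(b+1) times a
  polynomial, and for a + b + 1 = -n the equation for R has a polynomial solution
  (1 - x^2) P(1 + x) with deg P < n, found from a recursion that terminates.
*)

theory Submission
  imports Defs "HOL-Computational_Algebra.Polynomial_FPS" "HOL-Computational_Algebra.Polynomial_Factorial"
    "HOL-Computational_Algebra.Field_as_Ring"
begin

lemma Zminus_iff: "x \<in> Zminus \<longleftrightarrow> x \<in> \<int> \<and> x < 0"
proof
  assume "x \<in> Zminus"
  then show "x \<in> \<int> \<and> x < 0" unfolding Zminus_def by auto
next
  assume "x \<in> \<int> \<and> x < 0"
  then obtain m :: int where "x = of_int m" "m < 0" by (auto elim: Ints_cases)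
  then show "x \<in> Zminus" unfolding Zminus_def by (intro CollectI exI[of _ "nat (- m)"]) auto
qed

lemma Nats_add_notin_Zminus:
  assumes "x \<in> \<nat>" "y \<notin> Zminus"
  shows "x + y + 1 \<notin> Zminus"
proof
  assume "x + y + 1 \<in> Zminus"
  moreover have "x \<in> \<int>" "0 \<le> x" using assms(1) by (auto simp: Nats_altdef2)
  ultimately have "y \<in> \<int>" "y < 0"
    using Ints_diff[of "x + y + 1" "x + 1"] by (auto simp: Zminus_iff)
  then show False using assms(2) by (simp add: Zminus_iff)
qed

lemma W_pos: "x \<in> {-1<..<1} \<Longrightarrow> 0 < W a b x"
  by (auto simp: W_def)

lemma one_minus_square_pos: "x \<in> {-1<..<1} \<Longrightarrow> 0 < 1 - x\<^sup>2"
  for x :: real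
  by (simp add: abs_square_less_1 abs_less_iff)

lemma W_minus: "W a b (- x) = W b a x"
  by (simp add: W_def mult.commute)

lemma W_has_real_derivative:
  assumes "x \<in> {-1<..<1}"
  shows "(W a b has_real_derivative W a b x * (b / (1 + x) - a / (1 - x))) (at x)"
proof -
  have "1 - x > 0" "1 + x > 0" using assms by auto
  then show ?thesis unfolding W_def
    by (auto intro!: derivative_eq_intros simp: powr_diff field_simps)
qed

lemma quasi_rational_on_reflect:
  assumes "quasi_rational_on S rho d"
  shows "quasi_rational_on (uminus ` S) (\<lambda>x. - rho (- x)) (\<lambda>x. d (- x))"
proof -
  obtain p q where deriv: "\<forall>x\<in>S. (rho has_real_derivative d x) (at x)"
    and "q \<noteq> 0" and ratio: "\<forall>x\<in>S. poly q x * d x = poly p x * rho x"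
    using assms unfolding quasi_rational_on_def by blast
  have "((\<lambda>x. - rho (- x)) has_real_derivative d (- x)) (at x)" if "x \<in> uminus ` S" for x
  proof -
    have "((\<lambda>x. rho (- x)) has_real_derivative d (- x) * - 1) (at x)"
      using deriv that by (intro DERIV_chain2[of rho]) (auto intro!: derivative_eq_intros)
    then show ?thesis using DERIV_minus by fastforce
  qed
  moreover have "q \<circ>\<^sub>p [:0, -1:] \<noteq> 0" using \<open>q \<noteq> 0\<close> pcompose_eq_0 by fastforce
  moreover have "\<forall>x\<in>uminus ` S. poly (q \<circ>\<^sub>p [:0, -1:]) x * d (- x)
                   = poly (- (p \<circ>\<^sub>p [:0, -1:])) x * - rho (- x)"
    using ratio by (auto simp: poly_pcompose)
  ultimately show ?thesis unfolding quasi_rational_on_def by blast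
qed

lemma has_qr_antiderivative_reflect:
  "has_qr_antiderivative S f \<Longrightarrow> has_qr_antiderivative (uminus ` S) (\<lambda>x. f (- x))"
  unfolding has_qr_antiderivative_def using quasi_rational_on_reflect by blast

lemma has_qr_antiderivative_W_swap:
  "has_qr_antiderivative {-1<..<1} (W b a) \<longleftrightarrow> has_qr_antiderivative {-1<..<1} (W a b)"
proof -
  have *: "has_qr_antiderivative {-1<..<1} (W a b)" if "has_qr_antiderivative {-1<..<1} (W b a)" for a b
  proof -
    have "uminus ` {-1<..<1::real} = {-1<..<1}" by simp
    moreover have "(\<lambda>x. W b a (- x)) = W a b" by (simp add: W_minus fun_eq_iff)
    ultimately show ?thesis using has_qr_antiderivative_reflect[OF that] by simp
  qed
  show ?thesis using *[of b a] *[of a b] by blast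
qed

section \<open>The equation for R = rho / W\<close>

lemma poly_eq_0_if_infinite_roots:
  fixes p :: "'a::idom poly"
  assumes "infinite A" "\<forall>x\<in>A. poly p x = 0"
  shows "p = 0"
proof (rule ccontr)
  assume "p \<noteq> 0"
  then have "finite {x. poly p x = 0}" by (rule poly_roots_finite)
  moreover have "A \<subseteq> {x. poly p x = 0}" using assms(2) by blast
  ultimately show False using assms(1) finite_subset by blast
qed

(* q/p solves (1 - x^2) R' + (b (1 - x) - a (1 + x)) R = 1 - x^2, i.e. (R W)' = W, iff this
  vanishes: it is that equation multiplied by p^2. *)
definition ode_defect :: "real \<Rightarrow> real \<Rightarrow> real poly \<Rightarrow> real poly \<Rightarrow> real poly" where
  "ode_defect a b p q =
     [:1, 0, -1:] * (pderiv q * p - q * pderiv p) + [:b - a, - (a + b):] * p * q - [:1, 0, -1:] * p\<^sup>2"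

lemma poly_ode_defect:
  "poly (ode_defect a b p q) x =
     (1 - x\<^sup>2) * (poly (pderiv q) x * poly p x - poly q x * poly (pderiv p) x)
     + (b * (1 - x) - a * (1 + x)) * poly p x * poly q x - (1 - x\<^sup>2) * (poly p x)\<^sup>2"
  by (simp add: ode_defect_def algebra_simps power2_eq_square)

lemma ode_defect_mult: "ode_defect a b (p * g) (q * g) = g\<^sup>2 * ode_defect a b p q"
  by (simp add: ode_defect_def pderiv_mult power2_eq_square algebra_simps)

lemma ode_defect_reflect:
  "ode_defect b a (p \<circ>\<^sub>p [:0, -1:]) (- (q \<circ>\<^sub>p [:0, -1:])) = ode_defect a b p q \<circ>\<^sub>p [:0, -1:]"
  by (rule poly_eq_poly_eq_iff[THEN iffD1], rule ext)
     (simp add: poly_ode_defect poly_pcompose pderiv_pcompose pderiv_minus pderiv_pCons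
       algebra_simps power2_eq_square)

lemma ratio_times_W_has_real_derivative:
  assumes x: "x \<in> {-1<..<1}" and p: "poly p x \<noteq> 0"
  shows "((\<lambda>y. poly q y / poly p y * W a b y) has_real_derivative
           W a b x * (1 + poly (ode_defect a b p q) x / ((1 - x\<^sup>2) * (poly p x)\<^sup>2))) (at x)"
proof -
  have "1 - x \<noteq> 0" "1 + x \<noteq> 0" using x by auto
  have "((\<lambda>y. poly q y / poly p y * W a b y) has_real_derivative
          (poly (pderiv q) x * poly p x - poly q x * poly (pderiv p) x) / (poly p x * poly p x) * W a b x
          + W a b x * (b / (1 + x) - a / (1 - x)) * (poly q x / poly p x)) (at x)"
    by (rule DERIV_mult[OF DERIV_divide[OF poly_DERIV poly_DERIV p] W_has_real_derivative[OF x]])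
  then show ?thesis
  proof (rule DERIV_cong)
    have "1 - x\<^sup>2 \<noteq> 0" using one_minus_square_pos[OF x] by simp
    have B: "b / (1 + x) - a / (1 - x) = (b * (1 - x) - a * (1 + x)) / (1 - x\<^sup>2)"
      using \<open>1 - x \<noteq> 0\<close> \<open>1 + x \<noteq> 0\<close> \<open>1 - x\<^sup>2 \<noteq> 0\<close>
      by (simp add: field_simps) (simp add: power2_eq_square algebra_simps)
    define s where "s = 1 - x\<^sup>2"
    have "s \<noteq> 0" unfolding s_def by fact
    then show "(poly (pderiv q) x * poly p x - poly q x * poly (pderiv p) x) / (poly p x * poly p x) * W a b x
          + W a b x * (b / (1 + x) - a / (1 - x)) * (poly q x / poly p x)
        = W a b x * (1 + poly (ode_defect a b p q) x / ((1 - x\<^sup>2) * (poly p x)\<^sup>2))"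
      unfolding poly_ode_defect B s_def[symmetric] using p by (simp add: field_simps power2_eq_square)
  qed
qed

lemma ode_defect_eq_0_if_antiderivative:
  assumes deriv: "\<forall>x\<in>{-1<..<1}. (rho has_real_derivative W a b x) (at x)"
    and ratio: "\<forall>x\<in>{-1<..<1}. poly q x * W a b x = poly p x * rho x" and "p \<noteq> 0"
  shows "ode_defect a b p q = 0"
proof -
  define U where "U = {-1<..<1} - {x. poly p x = 0}"
  have roots: "finite {x. poly p x = 0}" using \<open>p \<noteq> 0\<close> by (rule poly_roots_finite)
  then have "open U" unfolding U_def by (intro open_Diff finite_imp_closed) auto
  have "infinite U" unfolding U_def using roots by (intro Diff_infinite_finite) auto
  moreover have "\<forall>x\<in>U. poly (ode_defect a b p q) x = 0"
  proof
    fix x assume "x \<in> U"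
    then have x: "x \<in> {-1<..<1}" and px: "poly p x \<noteq> 0" unfolding U_def by auto
    have "(rho has_real_derivative
            W a b x * (1 + poly (ode_defect a b p q) x / ((1 - x\<^sup>2) * (poly p x)\<^sup>2))) (at x)"
      using ratio_times_W_has_real_derivative[OF x px] \<open>open U\<close> \<open>x \<in> U\<close>
    proof (rule has_field_derivative_transform_within_open)
      show "poly q y / poly p y * W a b y = rho y" if "y \<in> U" for y
        using ratio that unfolding U_def by (auto simp: field_simps)
    qed
    then have "W a b x * (1 + poly (ode_defect a b p q) x / ((1 - x\<^sup>2) * (poly p x)\<^sup>2)) = W a b x"
      using deriv x DERIV_unique by blast
    moreover have "W a b x \<noteq> 0" "1 - x\<^sup>2 \<noteq> 0"
      using W_pos[OF x, of a b] one_minus_square_pos[OF x] by auto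
    ultimately show "poly (ode_defect a b p q) x = 0" using px by simp
  qed
  ultimately show ?thesis by (rule poly_eq_0_if_infinite_roots)
qed

lemma has_qr_antiderivative_imp_ode_solution:
  assumes "has_qr_antiderivative {-1<..<1} (W a b)"
  obtains p q where "ode_defect a b p q = 0" "p \<noteq> 0" "q \<noteq> 0" "coprime p q"
proof -
  obtain rho p q where deriv: "\<forall>x\<in>{-1<..<1}. (rho has_real_derivative W a b x) (at x)"
    and "q \<noteq> 0" and ratio: "\<forall>x\<in>{-1<..<1}. poly q x * W a b x = poly p x * rho x"
    using assms unfolding has_qr_antiderivative_def quasi_rational_on_def by blast
  have "p \<noteq> 0"
  proof
    assume "p = 0"
    have "\<forall>x\<in>{-1<..<1}. poly q x = 0"
      using ratio W_pos[of _ a b] \<open>p = 0\<close> by (metis mult_eq_0_iff less_irrefl poly_0)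
    then show False using \<open>q \<noteq> 0\<close> poly_eq_0_if_infinite_roots[of "{-1<..<1::real}"] by simp
  qed
  then have defect: "ode_defect a b p q = 0"
    using ode_defect_eq_0_if_antiderivative[OF deriv ratio] by blast
  define g where "g = gcd p q"
  have "g \<noteq> 0" unfolding g_def using \<open>p \<noteq> 0\<close> by simp
  then obtain p' q' where pq: "p = p' * g" "q = q' * g" and "coprime p' q'"
    unfolding g_def using gcd_coprime_exists by blast
  have "g\<^sup>2 * ode_defect a b p' q' = 0" using defect pq ode_defect_mult by metis
  then have "ode_defect a b p' q' = 0" using \<open>g \<noteq> 0\<close> by simp
  moreover have "p' \<noteq> 0" "q' \<noteq> 0" using pq \<open>p \<noteq> 0\<close> \<open>q \<noteq> 0\<close> by auto
  ultimately show ?thesis using that \<open>coprime p' q'\<close> by blast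
qed

lemma has_qr_antiderivative_if_ode_solution:
  assumes defect: "ode_defect a b p q = 0" and p: "\<forall>x\<in>{-1<..<1}. poly p x \<noteq> 0"
  shows "has_qr_antiderivative {-1<..<1} (W a b)"
proof -
  define rho where "rho y = poly q y / poly p y * W a b y" for y
  have "(rho has_real_derivative W a b x) (at x)" if "x \<in> {-1<..<1}" for x
    using ratio_times_W_has_real_derivative[OF that, of p q a b] p that defect
    unfolding rho_def[abs_def] by simp
  moreover have "q \<noteq> 0"
  proof
    assume "q = 0"
    then have "poly (ode_defect a b p q) 0 = - (poly p 0)\<^sup>2" by (simp add: poly_ode_defect)
    then show False using defect p by simp
  qed
  moreover have "\<forall>x\<in>{-1<..<1}. poly q x * W a b x = poly p x * rho x"
    using p by (simp add: rho_def)
  ultimately show ?thesis unfolding has_qr_antiderivative_def quasi_rational_on_def by blast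
qed

section \<open>Local analysis at x = 1 and x = -1\<close>

lemma pderiv_linear_power:
  "[:c, d:] * pderiv ([:c, d:] ^ n) = smult (of_nat n * d) ([:c, d:] ^ n)"
proof (cases n)
  case (Suc k)
  define L where "L = [:c, d:]"
  have "pderiv L = [:d:]" by (simp add: L_def pderiv_pCons)
  then show ?thesis unfolding L_def[symmetric] Suc
    by (simp add: pderiv_power_Suc mult.commute[of _ "[:d:]"] del: power_Suc) (simp add: mult.commute)
qed simp

lemma ode_defect_order_at_1:
  assumes defect: "ode_defect a b p q = 0" and "p \<noteq> 0" and q1: "poly q 1 \<noteq> 0"
  shows "a = of_nat (order 1 p)"
proof -
  (* With p = (x - 1)^m r, the defect is (x - 1)^m F and F(1) = 2 (m - a) q(1) r(1). *)
  define m where "m = order 1 p"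
  define L where "L = [:-1, 1::real:]"
  obtain r where p: "p = L ^ m * r" and "\<not> L dvd r"
    using order_decomp[OF \<open>p \<noteq> 0\<close>, of 1] unfolding m_def L_def by auto
  then have r1: "poly r 1 \<noteq> 0" by (simp add: L_def poly_eq_0_iff_dvd)
  have "L * pderiv (L ^ m) = smult (of_nat m) (L ^ m)"
    using pderiv_linear_power[of "-1" 1 m] unfolding L_def by (simp only: mult_1_right)
  moreover have "L * pderiv p = r * (L * pderiv (L ^ m)) + L ^ m * (L * pderiv r)"
    by (simp add: p pderiv_mult algebra_simps)
  ultimately have p': "L * pderiv p = L ^ m * (smult (of_nat m) r + L * pderiv r)"
    by (simp add: algebra_simps)
  define N M B where "N = [:1, 0, -1::real:]" and "M = [:1, 1::real:]" and "B = [:b - a, - (a + b):]"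
  define F where "F = N * pderiv q * r + M * q * (smult (of_nat m) r + L * pderiv r) + B * r * q - N * L ^ m * r\<^sup>2"
  have "N = - (M * L)" by (simp add: N_def M_def L_def)
  then have "ode_defect a b p q = N * pderiv q * p + M * q * (L * pderiv p) + B * p * q - N * p\<^sup>2"
    unfolding ode_defect_def N_def[symmetric] B_def[symmetric] by (simp add: algebra_simps)
  also have "\<dots> = L ^ m * F"
    unfolding p' unfolding p F_def by (simp add: algebra_simps power2_eq_square)
  finally have "ode_defect a b p q = L ^ m * F" .
  then have "poly F 1 = 0" using defect by (simp add: L_def)
  then have "2 * (of_nat m - a) * (poly q 1 * poly r 1) = 0"
    by (simp add: F_def L_def N_def M_def B_def algebra_simps)
  then show ?thesis using q1 r1 by (simp add: m_def)
qed

lemma ode_defect_root_at_1: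
  assumes "ode_defect a b p q = 0" "p \<noteq> 0" "poly p 1 \<noteq> 0 \<or> poly q 1 \<noteq> 0" "a \<notin> \<nat>"
  shows "poly p 1 \<noteq> 0 \<and> poly q 1 = 0"
  using ode_defect_order_at_1[OF assms(1,2)] assms(3,4) of_nat_in_Nats by metis

lemma ode_defect_root_at_minus_1:
  assumes "ode_defect a b p q = 0" "p \<noteq> 0" "poly p (-1) \<noteq> 0 \<or> poly q (-1) \<noteq> 0" "b \<notin> \<nat>"
  shows "poly p (-1) \<noteq> 0 \<and> poly q (-1) = 0"
proof -
  have "ode_defect b a (p \<circ>\<^sub>p [:0, -1:]) (- (q \<circ>\<^sub>p [:0, -1:])) = 0"
    using assms(1) by (simp add: ode_defect_reflect)
  moreover have "p \<circ>\<^sub>p [:0, -1:] \<noteq> 0" using assms(2) pcompose_eq_0 by fastforce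
  ultimately show ?thesis
    using ode_defect_root_at_1[of b a "p \<circ>\<^sub>p [:0, -1:]" "- (q \<circ>\<^sub>p [:0, -1:])"] assms(3,4)
    by (simp add: poly_pcompose)
qed

lemma coprime_linear_poly:
  fixes p :: "real poly"
  assumes "c \<noteq> 0" "poly p (- d / c) \<noteq> 0"
  shows "coprime p [:d, c:]"
proof -
  have "\<not> [:d, c:] dvd p"
  proof
    assume "[:d, c:] dvd p"
    then obtain r where "p = [:d, c:] * r" by (elim dvdE)
    then show False using assms by simp
  qed
  then show ?thesis
    using prime_elem_imp_coprime[OF prime_elem_linear_field_poly[OF \<open>c \<noteq> 0\<close>]]
    by (simp add: coprime_commute)
qed

lemma ode_defect_denominator_const:
  assumes defect: "ode_defect a b p q = 0" and "coprime p q" "poly p 1 \<noteq> 0" "poly p (-1) \<noteq> 0"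
  shows "degree p = 0"
proof -
  have "[:1, 0, -1:] * q * pderiv p
          = p * ([:1, 0, -1:] * pderiv q + [:b - a, - (a + b):] * q - [:1, 0, -1:] * p)"
    using defect unfolding ode_defect_def by (simp add: algebra_simps power2_eq_square)
  then have "p dvd [:1, 0, -1:] * q * pderiv p" by (metis dvd_triv_left)
  moreover have "coprime p ([:1, 0, -1:] * q)"
  proof -
    have "coprime p [:1, -1:]" "coprime p [:1, 1:]"
      using coprime_linear_poly[of "-1" p 1] coprime_linear_poly[of 1 p 1] assms(3,4) by simp_all
    then have "coprime p ([:1, -1:] * [:1, 1:] * q)"
      using \<open>coprime p q\<close> by (simp only: coprime_mult_right_iff)
    moreover have "[:1, -1:] * [:1, 1:] = [:1, 0, -1::real:]" by simp
    ultimately show ?thesis by simp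
  qed
  ultimately have "p dvd pderiv p" using coprime_dvd_mult_right_iff by blast
  then show ?thesis by simp
qed

lemma ode_defect_const_denominator:
  assumes defect: "ode_defect a b [:c:] q = 0" and "c \<noteq> 0" and "2 \<le> degree q"
  shows "a + b = - of_nat (degree q)"
proof -
  obtain n where n: "degree q = Suc (Suc n)" using \<open>2 \<le> degree q\<close> by (metis add_2_eq_Suc le_Suc_ex)
  have "coeff (ode_defect a b [:c:] q) (Suc (degree q)) = - c * (of_nat (degree q) + a + b) * lead_coeff q"
    by (simp add: ode_defect_def n coeff_pderiv coeff_eq_0 power2_eq_square algebra_simps)
  moreover have "lead_coeff q \<noteq> 0" using \<open>2 \<le> degree q\<close> by auto
  ultimately show ?thesis using defect \<open>c \<noteq> 0\<close> by simp
qed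

lemma fps_binomial_linear_deriv:
  fixes a c :: "'a::field_char_0"
  defines "E \<equiv> Abs_fps (\<lambda>n. (a gchoose n) * c ^ n)"
  shows "(1 + fps_const c * fps_X) * fps_deriv E = fps_const (a * c) * E"
proof (rule fps_ext)
  fix n
  have "(of_nat n + 1) * (a gchoose Suc n) = (a - of_nat n) * (a gchoose n)"
    using gbinomial_absorption[of n a] gbinomial_absorb_comp[of a n] by (simp add: algebra_simps)
  then have "c ^ Suc n * ((of_nat n + 1) * (a gchoose Suc n)) = c ^ Suc n * ((a - of_nat n) * (a gchoose n))"
    by simp
  then show "fps_nth ((1 + fps_const c * fps_X) * fps_deriv E) n = fps_nth (fps_const (a * c) * E) n"
    by (cases n) (simp_all add: E_def algebra_simps)
qed

lemma fps_of_poly_ode_defect_shift: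
  fixes p q :: "real poly"
  defines "P \<equiv> fps_of_poly (p \<circ>\<^sub>p [:-1, 1:])" and "Q \<equiv> fps_of_poly (q \<circ>\<^sub>p [:-1, 1:])"
    and "U \<equiv> fps_of_poly [:2, -1:]"
  shows "fps_of_poly (ode_defect a b p q \<circ>\<^sub>p [:-1, 1:]) = fps_X * U * (fps_deriv Q * P - Q * fps_deriv P)
      + (fps_const b * U - fps_const a * fps_X) * P * Q - fps_X * U * P\<^sup>2"
proof -
  let ?p = "p \<circ>\<^sub>p [:-1, 1:]" and ?q = "q \<circ>\<^sub>p [:-1, 1:]"
  have "ode_defect a b p q \<circ>\<^sub>p [:-1, 1:] = [:0, 1:] * [:2, -1:] * (pderiv ?q * ?p - ?q * pderiv ?p)
      + (smult b [:2, -1:] - smult a [:0, 1:]) * ?p * ?q - [:0, 1:] * [:2, -1:] * ?p\<^sup>2"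
    by (rule poly_eq_poly_eq_iff[THEN iffD1], rule ext)
       (simp add: poly_ode_defect poly_pcompose pderiv_pcompose pderiv_pCons algebra_simps power2_eq_square)
  moreover have "fps_of_poly [:0, 1::real:] = fps_X" by simp
  ultimately show ?thesis unfolding P_def Q_def U_def
    by (simp only: fps_of_poly_mult fps_of_poly_add fps_of_poly_diff fps_of_poly_pderiv
        fps_of_poly_power fps_of_poly_smult)
qed

lemma ode_defect_residue_at_minus_1:
  assumes defect: "ode_defect a b p q = 0" and p: "poly p (-1) \<noteq> 0"
    and b: "b = - of_nat l" and "1 \<le> l"
  shows "\<exists>k. a = of_nat k \<and> k + 2 \<le> l"
proof -
  define P Q where "P = fps_of_poly (p \<circ>\<^sub>p [:-1, 1:])" and "Q = fps_of_poly (q \<circ>\<^sub>p [:-1, 1:])"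
  define U where "U = fps_of_poly [:2, -1::real:]"
  define E where "E = Abs_fps (\<lambda>n. (a gchoose n) * (- 1 / 2) ^ n)"
  have shifted: "fps_X * U * (fps_deriv Q * P - Q * fps_deriv P)
      + (fps_const b * U - fps_const a * fps_X) * P * Q - fps_X * U * P\<^sup>2 = 0"
    using fps_of_poly_ode_defect_shift[of a b p q] defect unfolding P_def Q_def U_def by simp
  have "U = fps_const 2 * (1 + fps_const (- 1 / 2) * fps_X)"
    unfolding U_def by (rule fps_ext) (simp add: coeff_pCons split: nat.split)
  then have "fps_deriv E * U = fps_const 2 * ((1 + fps_const (- 1 / 2) * fps_X) * fps_deriv E)"
    by (simp add: ac_simps)
  also have "\<dots> = fps_const 2 * fps_const (a * (- 1 / 2)) * E"
    using fps_binomial_linear_deriv[of "- 1 / 2" a] unfolding E_def[symmetric] by (simp add: mult.assoc)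
  finally have E': "fps_deriv E * U = - fps_const a * E"
    by (simp flip: fps_const_mult fps_const_neg)
  have "fps_nth P 0 \<noteq> 0" using p by (simp add: P_def poly_0_coeff_0[symmetric] poly_pcompose)
  define G where "G = E * Q * inverse P"
  have GP: "G * P = E * Q"
    using inverse_mult_eq_1[OF \<open>fps_nth P 0 \<noteq> 0\<close>] by (simp add: G_def algebra_simps)
  then have dGP: "fps_deriv G * P + G * fps_deriv P = fps_deriv E * Q + E * fps_deriv Q"
    by (metis fps_deriv_mult add.commute)
  (* In t = 1 + x, W = 2^a t^b E and rho = R W = 2^a t^b G, so (t^b G)' = t^b E, i.e. K = 0.
    The coefficient of t^l in K is minus that of t^(l-1) in E, the residue of t^b E. *)
  define K where "K = fps_X * fps_deriv G + fps_const b * G - fps_X * E"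
  have "U * P\<^sup>2 * K = 0"
    unfolding K_def using shifted E' GP dGP by algebra
  moreover have "U \<noteq> 0" "P \<noteq> 0" using \<open>fps_nth P 0 \<noteq> 0\<close> by (auto simp: U_def)
  ultimately have "fps_nth K l = 0" by simp
  moreover obtain l' where l': "l = Suc l'" using \<open>1 \<le> l\<close> by (cases l) auto
  ultimately have "a gchoose l' = 0" by (simp add: K_def E_def b algebra_simps)
  then have "(\<Prod>i = 0..<l'. a - of_nat i) = 0" using gbinomial_mult_fact[of l' a] by simp
  then obtain k where "k < l'" "a = of_nat k" by auto
  then show ?thesis using l' by auto
qed

section \<open>Explicit antiderivatives\<close>

lemma poly_euler_equation_solvable:
  fixes P :: "real poly"
  assumes "\<forall>k\<le>degree P. c + of_nat k \<noteq> 0"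
  obtains Q where "[:0, 1:] * pderiv Q + smult c Q = P"
proof -
  define Q where "Q = (\<Sum>k\<le>degree P. monom (coeff P k / (c + of_nat k)) k)"
  have cQ: "coeff Q n = (if n \<le> degree P then coeff P n / (c + of_nat n) else 0)" for n
    by (simp add: Q_def coeff_sum)
  have cx: "coeff (pCons 0 (pderiv Q)) n = of_nat n * coeff Q n" for n
    by (cases n) (simp_all add: coeff_pderiv)
  have "[:0, 1:] * pderiv Q + smult c Q = P"
  proof (rule poly_eqI)
    fix n
    have "coeff ([:0, 1:] * pderiv Q + smult c Q) n = (c + of_nat n) * coeff Q n"
      by (simp add: cx algebra_simps)
    also have "\<dots> = coeff P n"
      using assms by (auto simp: cQ coeff_eq_0)
    finally show "coeff ([:0, 1:] * pderiv Q + smult c Q) n = coeff P n" .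
  qed
  then show ?thesis using that by blast
qed

lemma has_qr_antiderivative_W_of_nat:
  assumes "b \<notin> Zminus"
  shows "has_qr_antiderivative {-1<..<1} (W (of_nat n) b)"
proof -
  have "b + 1 + of_nat k \<noteq> 0" for k
  proof
    assume "b + 1 + of_nat k = 0"
    then have "b = - of_nat (Suc k)" by simp
    then show False using assms unfolding Zminus_def by force
  qed
  then obtain Q where Q: "[:0, 1:] * pderiv Q + smult (b + 1) Q = [:2, -1:] ^ n"
    using poly_euler_equation_solvable[of "[:2, -1:] ^ n" "b + 1"] by blast
  define p q where "p = [:1, -1::real:] ^ n" and "q = [:1, 1:] * (Q \<circ>\<^sub>p [:1, 1:])"
  have "poly (ode_defect (of_nat n) b p q) x = 0" for x
  proof -
    have "poly ([:0, 1:] * pderiv Q + smult (b + 1) Q) (1 + x) = poly p x"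
      unfolding Q by (simp add: p_def algebra_simps)
    then have Q': "(1 + x) * poly (pderiv Q) (1 + x) + (b + 1) * poly Q (1 + x) = poly p x"
      by simp
    have p': "(1 - x) * poly (pderiv p) x = - of_nat n * poly p x"
      using arg_cong[OF pderiv_linear_power[of 1 "-1" n], of "\<lambda>r. poly r x"]
      by (simp add: p_def algebra_simps)
    have "poly q x = (1 + x) * poly Q (1 + x)"
      and "poly (pderiv q) x = poly Q (1 + x) + (1 + x) * poly (pderiv Q) (1 + x)"
      by (simp_all add: q_def pderiv_mult pderiv_pcompose poly_pcompose pderiv_pCons algebra_simps
          del: mult_pCons_left mult_pCons_right)
    then show ?thesis unfolding poly_ode_defect using Q' p' by algebra
  qed
  then have "ode_defect (of_nat n) b p q = 0" using poly_all_0_iff_0 by metis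
  moreover have "\<forall>x\<in>{-1<..<1}. poly p x \<noteq> 0" by (simp add: p_def)
  ultimately show ?thesis by (rule has_qr_antiderivative_if_ode_solution)
qed

lemma terminating_poly_solution:
  fixes b :: real
  assumes "0 < n" and nz: "\<forall>k<n. b + of_nat k + 1 \<noteq> 0"
  obtains P where "[:0, 2, -1:] * pderiv P + [:2 * (b + 1), of_nat n - 1:] * P = 1"
proof -
  (* The coefficient recursion 2 (b + k + 2) c(k+1) = (k + 1 - n) c(k) stops at k = n - 1. *)
  define c where "c k = (\<Prod>j<k. (of_nat j + 1 - of_nat n) / (2 * (b + of_nat j + 2))) / (2 * (b + 1))"
    for k
  define P where "P = (\<Sum>k<n. monom (c k) k)"
  have cP: "coeff P k = (if k < n then c k else 0)" for k
    by (simp add: P_def coeff_sum)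
  have "b + 1 \<noteq> 0" using nz \<open>0 < n\<close> by auto
  have c_Suc: "c (Suc k) = c k * ((of_nat k + 1 - of_nat n) / (2 * (b + of_nat k + 2)))" for k
    by (simp add: c_def)
  have rec: "2 * (b + of_nat k + 2) * coeff P (Suc k) = (of_nat k + 1 - of_nat n) * coeff P k" for k
  proof (cases "Suc k < n")
    case True
    then have "b + of_nat k + 2 \<noteq> 0" using nz[rule_format, of "Suc k"] by (simp add: algebra_simps)
    then show ?thesis using True by (simp add: cP c_Suc)
  next
    case False
    then have "coeff P (Suc k) = 0" by (simp add: cP)
    moreover have "(of_nat k + 1 - of_nat n) * coeff P k = 0"
      using False by (cases "Suc k = n") (auto simp: cP)
    ultimately show ?thesis by simp
  qed
  have "[:0, 2, -1:] * pderiv P + [:2 * (b + 1), of_nat n - 1:] * P = 1"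
  proof (rule poly_eqI)
    fix k
    show "coeff ([:0, 2, -1:] * pderiv P + [:2 * (b + 1), of_nat n - 1:] * P) k = coeff 1 k"
    proof (cases k)
      case 0
      then show ?thesis using \<open>0 < n\<close> \<open>b + 1 \<noteq> 0\<close> by (simp add: cP c_def)
    next
      case (Suc j)
      have "coeff ([:0, 2, -1:] * pderiv P + [:2 * (b + 1), of_nat n - 1:] * P) (Suc j)
          = 2 * (b + of_nat j + 2) * coeff P (Suc j) - (of_nat j + 1 - of_nat n) * coeff P j"
        by (cases j) (simp_all add: coeff_pderiv algebra_simps)
      then show ?thesis using rec[of j] Suc by simp
    qed
  qed
  then show ?thesis using that by blast
qed

lemma has_qr_antiderivative_W_if_sum_in_Zminus:
  assumes "a + b + 1 \<in> Zminus" and "a \<notin> Zminus \<or> b \<notin> Zminus"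
  shows "has_qr_antiderivative {-1<..<1} (W a b)"
proof -
  obtain n :: nat where "1 \<le> n" and n: "a + b + 1 = - of_nat n"
    using assms(1) unfolding Zminus_def by auto
  have "b + of_nat k + 1 \<noteq> 0" if "k < n" for k
  proof
    assume "b + of_nat k + 1 = 0"
    then have "b = - of_nat (Suc k)" and "a = - of_nat (n - k)"
      using n \<open>k < n\<close> by simp_all
    then show False using assms(2) \<open>k < n\<close> by (auto simp: Zminus_iff)
  qed
  then obtain P where P: "[:0, 2, -1:] * pderiv P + [:2 * (b + 1), of_nat n - 1:] * P = 1"
    using terminating_poly_solution[of n b] \<open>1 \<le> n\<close> by auto
  define R where "R = [:1, 0, -1::real:] * (P \<circ>\<^sub>p [:1, 1:])"
  have "poly (ode_defect a b 1 R) x = 0" for x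
  proof -
    have "poly ([:0, 2, -1:] * pderiv P + [:2 * (b + 1), of_nat n - 1:] * P) (1 + x) = 1"
      unfolding P by simp
    then have P': "(1 + x) * (1 - x) * poly (pderiv P) (1 + x)
        + (2 * (b + 1) + (of_nat n - 1) * (1 + x)) * poly P (1 + x) = 1"
      by (simp add: algebra_simps)
    have "poly R x = (1 - x\<^sup>2) * poly P (1 + x)"
      and "poly (pderiv R) x = - 2 * x * poly P (1 + x) + (1 - x\<^sup>2) * poly (pderiv P) (1 + x)"
      by (simp_all add: R_def pderiv_mult pderiv_pcompose poly_pcompose pderiv_pCons
          algebra_simps power2_eq_square del: mult_pCons_left mult_pCons_right)
    moreover have "a = - of_nat n - b - 1" using n by simp
    ultimately show ?thesis unfolding poly_ode_defect using P' by simp algebra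
  qed
  then have "ode_defect a b 1 R = 0" using poly_all_0_iff_0 by metis
  then show ?thesis by (rule has_qr_antiderivative_if_ode_solution) simp
qed

section \<open>Necessary conditions\<close>

lemma has_qr_antiderivative_W_Zminus_imp_Ints:
  assumes qr: "has_qr_antiderivative {-1<..<1} (W a b)" and "b \<in> Zminus"
  shows "a + b + 1 \<in> Zminus \<and> a \<in> \<int> \<and> b \<in> \<int> \<and> a * b \<le> 0"
proof -
  obtain p q where defect: "ode_defect a b p q = 0" and "p \<noteq> 0" "q \<noteq> 0" "coprime p q"
    by (rule has_qr_antiderivative_imp_ode_solution[OF qr])
  obtain l :: nat where "1 \<le> l" and b: "b = - of_nat l"
    using \<open>b \<in> Zminus\<close> unfolding Zminus_def by auto
  then have "b \<notin> \<nat>" by (auto simp: Nats_altdef2)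
  then have "poly p (-1) \<noteq> 0"
    using ode_defect_root_at_minus_1[OF defect \<open>p \<noteq> 0\<close> coprime_poly_0[OF \<open>coprime p q\<close>]]
    by blast
  then obtain k where "a = of_nat k" "k + 2 \<le> l"
    using ode_defect_residue_at_minus_1[OF defect _ b \<open>1 \<le> l\<close>] by blast
  then show ?thesis using b by (auto simp: Zminus_iff mult_nonneg_nonpos)
qed

lemma has_qr_antiderivative_W_imp_sum_in_Zminus:
  assumes qr: "has_qr_antiderivative {-1<..<1} (W a b)" and "a \<notin> \<nat>" "b \<notin> \<nat>"
  shows "a + b + 1 \<in> Zminus"
proof -
  obtain p q where defect: "ode_defect a b p q = 0" and "p \<noteq> 0" "q \<noteq> 0" "coprime p q"
    by (rule has_qr_antiderivative_imp_ode_solution[OF qr])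
  note no_common_root = coprime_poly_0[OF \<open>coprime p q\<close>]
  have 1: "poly p 1 \<noteq> 0 \<and> poly q 1 = 0"
    using ode_defect_root_at_1[OF defect \<open>p \<noteq> 0\<close> no_common_root \<open>a \<notin> \<nat>\<close>] .
  have minus_1: "poly p (-1) \<noteq> 0 \<and> poly q (-1) = 0"
    using ode_defect_root_at_minus_1[OF defect \<open>p \<noteq> 0\<close> no_common_root \<open>b \<notin> \<nat>\<close>] .
  have "degree p = 0" using ode_defect_denominator_const[OF defect \<open>coprime p q\<close>] 1 minus_1 by blast
  then have p: "p = [:coeff p 0:]" and "coeff p 0 \<noteq> 0"
    using \<open>p \<noteq> 0\<close> by (metis degree_0_id, metis degree_0_id pCons_0_0)
  obtain r where r: "q = [:-1, 1:] * r" using 1 poly_eq_0_iff_dvd[of q 1] by auto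
  then have "poly r (-1) = 0" using minus_1 by simp
  then obtain s where s: "r = [:1, 1:] * s" using poly_eq_0_iff_dvd[of r "-1"] by auto
  then have "s \<noteq> 0" using \<open>q \<noteq> 0\<close> r by auto
  then have "degree q = degree s + 2"
    unfolding r s by (simp add: degree_mult_eq del: mult_pCons_left mult_pCons_right)
  moreover have "a + b = - of_nat (degree q)"
    using ode_defect_const_denominator[of a b "coeff p 0" q] defect p \<open>coeff p 0 \<noteq> 0\<close> calculation
    by simp
  ultimately show ?thesis by (simp add: Zminus_iff)
qed

theorem mainTheorem12:
  fixes a b :: real
  defines "condA \<equiv> (a \<in> \<nat> \<and> b \<notin> Zminus) \<or> (b \<in> \<nat> \<and> a \<notin> Zminus)"
      and "condC \<equiv> a + b + 1 \<in> Zminus \<and> a \<notin> Zminus \<and> b \<notin> Zminus"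
      and "condH \<equiv> a + b + 1 \<in> Zminus \<and> a \<in> \<int> \<and> b \<in> \<int> \<and> a * b \<le> 0"
  shows "(has_qr_antiderivative {-1<..<1} (W a b) \<longleftrightarrow> condA \<or> condC \<or> condH)
         \<and> \<not> (condA \<and> condC) \<and> \<not> (condA \<and> condH) \<and> \<not> (condC \<and> condH)"
proof -
  note swap = has_qr_antiderivative_W_swap[of a b]
  have "condA \<or> condC \<or> condH" if qr: "has_qr_antiderivative {-1<..<1} (W a b)"
  proof (cases "a \<in> Zminus \<or> b \<in> Zminus")
    case True
    then show ?thesis
      using has_qr_antiderivative_W_Zminus_imp_Ints[of a b] has_qr_antiderivative_W_Zminus_imp_Ints[of b a] qr swap
      unfolding condH_def by (auto simp: ac_simps)
  next
    case False
    then show ?thesis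
      using has_qr_antiderivative_W_imp_sum_in_Zminus[OF qr] unfolding condA_def condC_def by blast
  qed
  moreover have "has_qr_antiderivative {-1<..<1} (W a b)" if conds: "condA \<or> condC \<or> condH"
  proof -
    have "a \<notin> Zminus \<or> b \<notin> Zminus" if condH
      using that mult_neg_neg[of a b] unfolding condH_def Zminus_iff by auto
    then show ?thesis
      using conds has_qr_antiderivative_W_of_nat[of b] has_qr_antiderivative_W_of_nat[of a] swap
        has_qr_antiderivative_W_if_sum_in_Zminus[of a b]
      unfolding condA_def condC_def condH_def by (auto elim!: Nats_cases)
  qed
  moreover have "\<not> (condA \<and> condC) \<and> \<not> (condA \<and> condH) \<and> \<not> (condC \<and> condH)"
    using Nats_add_notin_Zminus[of a b] Nats_add_notin_Zminus[of b a]
    unfolding condA_def condC_def condH_def by (auto simp: Zminus_iff ac_simps)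
  ultimately show ?thesis by blast
qed

end
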